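(* Let $G$ be a finite group, $H$ a normal subgroup of $G$, and $K$ a subgroup of $G$ with either $H\cap K=\{1\}$ or $K\subseteq H$. Let $J=[HK:K]$ and let $\{t_1,\dots,t_J\}$ be a transversal for the left cosets of $K$ in $HK$. Let $\lambda:G\to\mathbb{Z}$ be defined by $\lambda(g)=J-1$ if $g\in K$, $\lambda(g)=-1$ if $g\in HK\setminus K$, and $\lambda(g)=0$ if $g\notin HK$. Then every subset of cardinality $J-1$ of the collection of functions $\{[t_j,\lambda]:j=1,\dots,J\}$ is linearly independent (over $\mathbb{Z}$).
   Context: $HK=\{hk:h\in H,k\in K\}$ is a subgroup since $H$ is normal. For $g\in G$ and a function $f:G\to\mathbb{Z}$, $[g,f]$ denotes the function $x\mapsto f(g^{-1}x)$. *)

theory Defs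
  imports "HOL-Algebra.Algebra"
begin

text \<open>The left translate [g,f] of a function f on the carrier of G: x maps to f(g^-1 x),
  and 0 outside the carrier (so functions G to Z are represented canonically).\<close>
definition translate :: "('a, 'b) monoid_scheme \<Rightarrow> 'a \<Rightarrow> ('a \<Rightarrow> int) \<Rightarrow> ('a \<Rightarrow> int)" where
  "translate G g f = (\<lambda>x. if x \<in> carrier G then f (inv\<^bsub>G\<^esub> g \<otimes>\<^bsub>G\<^esub> x) else 0)"

definition lam_fun :: "('a, 'b) monoid_scheme \<Rightarrow> 'a set \<Rightarrow> 'a set \<Rightarrow> nat \<Rightarrow> 'a \<Rightarrow> int" where
  "lam_fun G H K J = (\<lambda>g. if g \<in> K then int J - 1
                          else if g \<in> H <#>\<^bsub>G\<^esub> K then -1 else 0)"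

definition int_lin_indep_on :: "'a set \<Rightarrow> ('a \<Rightarrow> int) set \<Rightarrow> bool" where
  "int_lin_indep_on A F \<longleftrightarrow> finite F \<and>
     (\<forall>c :: ('a \<Rightarrow> int) \<Rightarrow> int. (\<forall>x\<in>A. (\<Sum>f\<in>F. c f * f x) = 0) \<longrightarrow> (\<forall>f\<in>F. c f = 0))"

end

theory Submission
  imports Defs "HOL-Algebra.SndIsomorphismGrp"
begin

text \<open>Evaluating the translates at the transversal itself gives the matrix \<open>J \<cdot> I - 1\<close>:
  \<open>[t\<^sub>j,\<lambda>](t\<^sub>i)\<close> is \<open>J - 1\<close> if \<open>i = j\<close> and \<open>-1\<close> otherwise, because \<open>t\<^sub>j\<^sup>-\<^sup>1 t\<^sub>i\<close> lies in
  \<open>HK\<close> and lies in \<open>K\<close> exactly when \<open>i = j\<close>. Given a relation \<open>\<Sum> c\<^sub>j [t\<^sub>j,\<lambda>] = 0\<close> over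
  all indices but \<open>m\<close>, evaluating at \<open>t\<^sub>m\<close> shows \<open>\<Sum> c\<^sub>j = 0\<close>, and then evaluating at \<open>t\<^sub>i\<close>
  leaves \<open>J c\<^sub>i = 0\<close>.\<close>

lemma (in group) set_mult_normal_subgroup:
  assumes "H \<lhd> G" and "subgroup K G"
  shows "subgroup (H <#> K) G"
  using assms second_isomorphism_grp.normal_set_mult_subgroup
  unfolding second_isomorphism_grp_def second_isomorphism_grp_axioms_def by blast

lemma (in group) l_coset_eq_iff:
  assumes "subgroup K G" "a \<in> carrier G" "b \<in> carrier G"
  shows "a <# K = b <# K \<longleftrightarrow> inv a \<otimes> b \<in> K"
proof
  assume "a <# K = b <# K"
  then have "b \<in> a <# K" using lcos_self[OF assms(3,1)] by simp
  then show "inv a \<otimes> b \<in> K" using subgroup.lcos_module_imp[OF assms(1) is_group assms(2)] by blast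
next
  assume "inv a \<otimes> b \<in> K"
  then have "b \<in> a <# K" using subgroup.lcos_module_rev[OF assms(1) is_group assms(2,3)] by blast
  then show "a <# K = b <# K" using l_repr_independence[OF _ assms(2,1)] by blast
qed

lemma (in group) translate_lam_fun_on_set_mult:
  assumes "subgroup K G" and HK: "subgroup (H <#> K) G"
    and a: "a \<in> H <#> K" and b: "b \<in> H <#> K"
  shows "translate G a (lam_fun G H K n) b = (if a <# K = b <# K then int n - 1 else -1)"
proof -
  have carr: "a \<in> carrier G" "b \<in> carrier G" using a b subgroup.subset[OF HK] by auto
  have "inv a \<otimes> b \<in> H <#> K"
    using subgroup.m_closed[OF HK subgroup.m_inv_closed[OF HK a] b] .
  then show ?thesis
    unfolding translate_def lam_fun_def using carr l_coset_eq_iff[OF assms(1) carr] by auto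
qed

lemma inj_on_if_shifted_identity_values:
  assumes "finite I"
    and val: "\<And>i j. i \<in> I \<Longrightarrow> j \<in> I \<Longrightarrow> f j (p i) = (if i = j then int (card I) - 1 else -1)"
  shows "inj_on f I"
proof (rule inj_onI, rule ccontr)
  fix i j assume i: "i \<in> I" and j: "j \<in> I" and "f i = f j" and "i \<noteq> j"
  then have "int (card I) - 1 = -1" using val[OF i i] val[OF i j] by simp
  then show False using i \<open>finite I\<close> by (simp add: card_gt_0_iff)
qed

lemma int_lin_indep_on_omitting_one:
  assumes "finite I" and pA: "p ` I \<subseteq> A"
    and val: "\<And>i j. i \<in> I \<Longrightarrow> j \<in> I \<Longrightarrow> f j (p i) = (if i = j then int (card I) - 1 else -1)"
    and F: "F \<subseteq> f ` I" and m: "m \<in> I" "f m \<notin> F"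
  shows "int_lin_indep_on A F"
  unfolding int_lin_indep_on_def
proof (intro conjI allI impI ballI)
  show finF: "finite F" using F \<open>finite I\<close> finite_subset by blast
  fix c g
  assume rel: "\<forall>x\<in>A. (\<Sum>h\<in>F. c h * h x) = 0" and g: "g \<in> F"
  have inj: "inj_on f I" by (rule inj_on_if_shifted_identity_values[where f = f and p = p, OF assms(1) val])
  have eval_m: "(\<Sum>h\<in>F. c h * h (p m)) = (\<Sum>h\<in>F. - c h)"
  proof (rule sum.cong)
    fix h assume "h \<in> F"
    then obtain j where "j \<in> I" "h = f j" "j \<noteq> m" using F m by blast
    then show "c h * h (p m) = - c h" using val[OF m(1)] by simp
  qed simp
  have "p m \<in> A" using pA m(1) by blast
  with rel eval_m have sum_c: "(\<Sum>h\<in>F. c h) = 0" by (simp add: sum_negf)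
  obtain i where i: "i \<in> I" "g = f i" using g F by blast
  have "(\<Sum>h\<in>F. c h * h (p i)) = (\<Sum>h\<in>F. (if h = g then int (card I) * c h else 0) - c h)"
  proof (rule sum.cong)
    fix h assume "h \<in> F"
    then obtain j where j: "j \<in> I" "h = f j" using F by blast
    then have "h = g \<longleftrightarrow> i = j" using i inj_onD[OF inj] by blast
    then show "c h * h (p i) = (if h = g then int (card I) * c h else 0) - c h"
      using val[OF i(1) j(1)] j by (simp add: algebra_simps)
  qed simp
  also have "\<dots> = int (card I) * c g" using g finF sum_c by (simp add: sum_subtractf)
  finally have eval_i: "(\<Sum>h\<in>F. c h * h (p i)) = int (card I) * c g" .
  have "p i \<in> A" using pA i(1) by blast
  with rel eval_i have "int (card I) * c g = 0" by simp
  moreover have "card I \<noteq> 0" using i(1) \<open>finite I\<close> by auto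
  ultimately show "c g = 0" by simp
qed

lemma int_lin_indep_on_card_minus_one:
  assumes "finite I" and pA: "p ` I \<subseteq> A"
    and val: "\<And>i j. i \<in> I \<Longrightarrow> j \<in> I \<Longrightarrow> f j (p i) = (if i = j then int (card I) - 1 else -1)"
    and F: "F \<subseteq> f ` I" "card F = card I - 1"
  shows "int_lin_indep_on A F"
proof (cases "F = {}")
  case True
  then show ?thesis by (simp add: int_lin_indep_on_def)
next
  case False
  have "finite F" using F(1) \<open>finite I\<close> finite_subset by blast
  with False have "card F \<noteq> 0" by simp
  then have "card F < card I" using F(2) by linarith
  also have "card I = card (f ` I)"
    using card_image[OF inj_on_if_shifted_identity_values[where f = f and p = p, OF assms(1) val]] ..
  finally have "F \<noteq> f ` I" by (intro notI) simp
  then obtain m where "m \<in> I" "f m \<notin> F" using F by blast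
  then show ?thesis using int_lin_indep_on_omitting_one[OF assms(1-3) F(1)] by blast
qed

theorem lemma3p2:
  fixes G (structure) and H K :: "'a set" and J :: nat and t :: "nat \<Rightarrow> 'a"
  assumes "group G" and "finite (carrier G)"
    and "H \<lhd> G" and "subgroup K G"
    and "H \<inter> K = {\<one>} \<or> K \<subseteq> H"
    and "J = card ((\<lambda>x. x <# K) ` (H <#> K))"
    and "\<forall>j\<in>{1..J}. t j \<in> H <#> K"
    and "bij_betw (\<lambda>j. t j <# K) {1..J} ((\<lambda>x. x <# K) ` (H <#> K))"
  shows "\<forall>F. F \<subseteq> (\<lambda>j. translate G (t j) (lam_fun G H K J)) ` {1..J} \<and> card F = J - 1
           \<longrightarrow> int_lin_indep_on (carrier G) F"
proof (intro allI impI)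
  interpret group G by fact
  fix F assume F: "F \<subseteq> (\<lambda>j. translate G (t j) (lam_fun G H K J)) ` {1..J} \<and> card F = J - 1"
  have HK: "subgroup (H <#> K) G" using set_mult_normal_subgroup[OF assms(3,4)] .
  have inj: "inj_on (\<lambda>j. t j <# K) {1..J}" using assms(8) bij_betw_def by blast
  show "int_lin_indep_on (carrier G) F"
  proof (rule int_lin_indep_on_card_minus_one
      [where I = "{1..J}" and p = t and f = "\<lambda>j. translate G (t j) (lam_fun G H K J)"])
    show "t ` {1..J} \<subseteq> carrier G" using assms(7) subgroup.subset[OF HK] by blast
    show "translate G (t j) (lam_fun G H K J) (t i) = (if i = j then int (card {1..J}) - 1 else -1)"
      if "i \<in> {1..J}" "j \<in> {1..J}" for i j
    proof -
      have "t j <# K = t i <# K \<longleftrightarrow> i = j" using inj_onD[OF inj] that by blast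
      moreover have "t i \<in> H <#> K" "t j \<in> H <#> K" using assms(7) that by auto
      ultimately show ?thesis using translate_lam_fun_on_set_mult[OF assms(4) HK, of "t j" "t i" J] by simp
    qed
    show "F \<subseteq> (\<lambda>j. translate G (t j) (lam_fun G H K J)) ` {1..J}" "card F = card {1..J} - 1"
      using F by simp_all
  qed simp
qed

end
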